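(* Let $m\ge 1$, let ${\bf h}\in\mathbb{F}_q^m$ be a nonzero column vector, and let $C$ be the linear $[m+1,m,d]_q$ code with generator matrix $G=[I\,|\,{\bf h}]$, where $I$ is the $m\times m$ identity matrix. If $\mathrm{wt}({\bf h})<m$, then $C$ is a completely regular code with $d=\rho=1$. If $\mathrm{wt}({\bf h})=m$, then $C$ is a completely regular code with $d=2$ and $\rho=1$.
   Context: $\mathbb{F}_q$ is the finite field with $q$ elements; $\mathrm{wt}$ is Hamming weight, $d$ the minimum Hamming distance of the code, and $\rho=\max_{{\bf v}\in\mathbb{F}_q^{m+1}}\min_{{\bf x}\in C}d({\bf v},{\bf x})$ its covering radius. A code $C$ is completely regular if for every vector ${\bf x}$, with $t=d({\bf x},C)$, the number of codewords at distance $i$ from ${\bf x}$ depends only on $t$ and $i$. *)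

theory Defs
  imports Main
begin

definition vecs :: "nat \<Rightarrow> 'a list set" where
  "vecs n = {x. length x = n}"

definition hdist :: "'a list \<Rightarrow> 'a list \<Rightarrow> nat" where
  "hdist x y = card {i. i < length x \<and> x ! i \<noteq> y ! i}"

definition wt :: "'a::zero list \<Rightarrow> nat" where
  "wt x = card {i. i < length x \<and> x ! i \<noteq> 0}"

definition gen_code :: "'a::comm_semiring_1 list list \<Rightarrow> nat \<Rightarrow> 'a list set" where
  "gen_code G n = {x. \<exists>u. length u = length G \<and>
      x = map (\<lambda>j. \<Sum>i<length G. u ! i * (G ! i ! j)) [0..<n]}"

definition gen_matrix_Ih :: "nat \<Rightarrow> 'a::{zero,one} list \<Rightarrow> 'a list list" where
  "gen_matrix_Ih m h = map (\<lambda>i. map (\<lambda>j. if j < m then (if i = j then 1 else 0) else h ! i)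
                              [0..<m+1]) [0..<m]"

definition min_dist :: "'a list set \<Rightarrow> nat" where
  "min_dist C = Min {hdist x y | x y. x \<in> C \<and> y \<in> C \<and> x \<noteq> y}"

definition dist_code :: "'a list \<Rightarrow> 'a list set \<Rightarrow> nat" where
  "dist_code v C = Min {hdist v x | x. x \<in> C}"

definition covering_radius :: "nat \<Rightarrow> 'a list set \<Rightarrow> nat" where
  "covering_radius n C = Max {dist_code v C | v. v \<in> vecs n}"

definition completely_regular :: "nat \<Rightarrow> 'a list set \<Rightarrow> bool" where
  "completely_regular n C \<longleftrightarrow>
     (\<forall>x \<in> vecs n. \<forall>y \<in> vecs n. dist_code x C = dist_code y C \<longrightarrow>
        (\<forall>i. card {c \<in> C. hdist x c = i} = card {c \<in> C. hdist y c = i}))"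

end

theory Submission
  imports Defs
begin

text \<open>The code generated by [I | h] is the kernel of the syndrome
  s(x) = x_m - \<Sum>_{i<m} x_i h_i, so every vector is a codeword or at distance 1 from one;
  this gives \<rho> = 1 and identifies the distance to C with whether s(x) vanishes. For vectors
  x, y with s(y) = \<lambda> s(x), \<lambda> \<noteq> 0, the affine bijection c \<mapsto> y + \<lambda>(c - x) maps C onto C and
  turns distances from x into distances from y, which yields complete regularity. Finally
  d = 1 iff some codeword of weight 1 exists, i.e. iff some h_k = 0: a weight-one codeword
  can only be a unit vector e_k with h_k = 0.\<close>

definition syndrome :: "nat \<Rightarrow> 'a::field list \<Rightarrow> 'a list \<Rightarrow> 'a" where
  "syndrome m h x = x ! m - (\<Sum>i<m. x ! i * h ! i)"

definition parity_code :: "nat \<Rightarrow> 'a::field list \<Rightarrow> 'a list set" where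
  "parity_code m h = {x. length x = m + 1 \<and> syndrome m h x = 0}"

lemma nth_gen_matrix_Ih:
  assumes "i < m" "j < m + 1"
  shows "gen_matrix_Ih m h ! i ! j = (if j < m then (if i = j then 1 else 0) else h ! i)"
  using assms unfolding gen_matrix_Ih_def by (simp del: upt_Suc)

lemma length_gen_matrix_Ih: "length (gen_matrix_Ih m h) = m"
  by (simp add: gen_matrix_Ih_def)

lemma gen_matrix_Ih_combination:
  fixes h :: "'a::field list"
  assumes "length u = m" "j < m + 1"
  shows "(\<Sum>i<m. u ! i * gen_matrix_Ih m h ! i ! j)
           = (if j < m then u ! j else \<Sum>i<m. u ! i * h ! i)"
proof (cases "j < m")
  case True
  have "(\<Sum>i<m. u ! i * gen_matrix_Ih m h ! i ! j) = (\<Sum>i<m. if i = j then u ! i else 0)"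
    using True by (intro sum.cong) (auto simp: nth_gen_matrix_Ih)
  then show ?thesis using True by simp
next
  case False
  then show ?thesis using assms by (simp add: nth_gen_matrix_Ih)
qed

lemma gen_code_Ih_eq_parity_code:
  fixes h :: "'a::field list"
  shows "gen_code (gen_matrix_Ih m h) (m + 1) = parity_code m h"
proof (intro set_eqI iffI)
  fix x assume "x \<in> gen_code (gen_matrix_Ih m h) (m + 1)"
  then obtain u where u: "length u = m"
    and x: "x = map (\<lambda>j. \<Sum>i<m. u ! i * gen_matrix_Ih m h ! i ! j) [0..<m + 1]"
    unfolding gen_code_def by (auto simp: length_gen_matrix_Ih)
  have entry: "x ! j = (if j < m then u ! j else \<Sum>i<m. u ! i * h ! i)" if "j < m + 1" for j
    using that u by (simp add: x gen_matrix_Ih_combination del: upt_Suc)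
  have "(\<Sum>i<m. x ! i * h ! i) = (\<Sum>i<m. u ! i * h ! i)"
    by (intro sum.cong) (simp_all add: entry)
  then have "(\<Sum>i<m. x ! i * h ! i) = x ! m"
    by (simp add: entry)
  then show "x \<in> parity_code m h"
    by (simp add: parity_code_def syndrome_def x)
next
  fix x assume "x \<in> parity_code m h"
  then have len: "length x = m + 1" and last: "x ! m = (\<Sum>i<m. x ! i * h ! i)"
    by (auto simp: parity_code_def syndrome_def)
  have "x = map (\<lambda>j. \<Sum>i<m. take m x ! i * gen_matrix_Ih m h ! i ! j) [0..<m + 1]"
  proof (rule nth_equalityI)
    fix j assume j: "j < length x"
    have "(\<Sum>i<m. take m x ! i * gen_matrix_Ih m h ! i ! j)
            = (if j < m then take m x ! j else \<Sum>i<m. take m x ! i * h ! i)"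
      using len j by (intro gen_matrix_Ih_combination) auto
    also have "\<dots> = x ! j"
      using len j last by (cases "j < m") (auto simp: less_Suc_eq intro: sum.cong)
    finally show "x ! j = map (\<lambda>j. \<Sum>i<m. take m x ! i * gen_matrix_Ih m h ! i ! j)
                               [0..<m + 1] ! j"
      using j len by (simp del: upt_Suc)
  qed (use len in simp)
  then show "x \<in> gen_code (gen_matrix_Ih m h) (m + 1)"
    unfolding gen_code_def using len
    by (intro CollectI exI[of _ "take m x"]) (simp add: length_gen_matrix_Ih del: upt_Suc)
qed

section \<open>Hamming distance\<close>

lemma hdist_le_length: "hdist v x \<le> length v"
  unfolding hdist_def by (rule order_trans[OF card_mono[of "{..<length v}"]]) auto

lemma hdist_self [simp]: "hdist x x = 0"
  by (simp add: hdist_def)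

lemma hdist_eq_0_iff: "length x = length y \<Longrightarrow> hdist x y = 0 \<longleftrightarrow> x = y"
  by (auto simp: hdist_def intro!: nth_equalityI)

lemma hdist_pos: "length x = length y \<Longrightarrow> x \<noteq> y \<Longrightarrow> 0 < hdist x y"
  using hdist_eq_0_iff[of x y] by linarith

lemma dist_code_eqI:
  assumes "c \<in> C" "hdist v c = d" "\<And>x. x \<in> C \<Longrightarrow> d \<le> hdist v x"
  shows "dist_code v C = d"
  unfolding dist_code_def
proof (rule Min_eqI)
  show "finite {hdist v x | x. x \<in> C}"
    by (rule finite_subset[of _ "{..length v}"]) (auto intro: hdist_le_length)
qed (use assms in auto)

lemma min_dist_eqI:
  assumes "C \<subseteq> vecs n" "x \<in> C" "y \<in> C" "x \<noteq> y" "hdist x y = d"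
    and "\<And>x y. x \<in> C \<Longrightarrow> y \<in> C \<Longrightarrow> x \<noteq> y \<Longrightarrow> d \<le> hdist x y"
  shows "min_dist C = d"
  unfolding min_dist_def
proof (rule Min_eqI)
  show "finite {hdist x y | x y. x \<in> C \<and> y \<in> C \<and> x \<noteq> y}"
  proof (rule finite_subset[of _ "{..n}"])
    show "{hdist x y | x y. x \<in> C \<and> y \<in> C \<and> x \<noteq> y} \<subseteq> {..n}"
      using assms(1) hdist_le_length by (fastforce simp: vecs_def)
  qed simp
  show "d \<in> {hdist x y | x y. x \<in> C \<and> y \<in> C \<and> x \<noteq> y}"
    using assms(2-5) by blast
qed (use assms(5,6) in auto)

section \<open>Affine isometries\<close>

definition affine_move :: "'a::field list \<Rightarrow> 'a \<Rightarrow> 'a list \<Rightarrow> 'a list \<Rightarrow> 'a list" where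
  "affine_move y l x c = map (\<lambda>j. y ! j + l * (c ! j - x ! j)) [0..<length y]"

lemma length_affine_move [simp]: "length (affine_move y l x c) = length y"
  by (simp add: affine_move_def)

lemma nth_affine_move [simp]:
  "j < length y \<Longrightarrow> affine_move y l x c ! j = y ! j + l * (c ! j - x ! j)"
  by (simp add: affine_move_def)

lemma hdist_affine_move:
  assumes "l \<noteq> 0" "length x = length y"
  shows "hdist y (affine_move y l x c) = hdist x c"
proof -
  have "{j. j < length y \<and> y ! j \<noteq> affine_move y l x c ! j} = {j. j < length x \<and> x ! j \<noteq> c ! j}"
    using assms by (auto simp: affine_move_def)
  then show ?thesis by (simp add: hdist_def)
qed

lemma affine_move_inverse:
  assumes "l \<noteq> 0" "length x = length y" "length c = length y"
  shows "affine_move x (inverse l) y (affine_move y l x c) = c"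
  using assms by (intro nth_equalityI) (auto simp: affine_move_def field_simps)

lemma syndrome_affine_move:
  fixes h :: "'a::field list"
  assumes "length y = m + 1"
  shows "syndrome m h (affine_move y l x c) = syndrome m h y + l * (syndrome m h c - syndrome m h x)"
proof -
  have "(\<Sum>i<m. affine_move y l x c ! i * h ! i) = (\<Sum>i<m. (y ! i + l * (c ! i - x ! i)) * h ! i)"
    using assms by (intro sum.cong) auto
  also have "\<dots> = (\<Sum>i<m. y ! i * h ! i) + l * ((\<Sum>i<m. c ! i * h ! i) - (\<Sum>i<m. x ! i * h ! i))"
    by (simp add: algebra_simps sum.distrib sum_subtractf sum_distrib_left)
  finally show ?thesis
    using assms by (simp add: syndrome_def algebra_simps)
qed

lemma affine_move_parity_code:
  assumes "c \<in> parity_code m h" "length y = m + 1" "syndrome m h y = l * syndrome m h x"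
  shows "affine_move y l x c \<in> parity_code m h"
  using assms by (simp add: parity_code_def syndrome_affine_move)

lemma card_parity_code_at_distance_eq:
  fixes h :: "'a::field list"
  assumes x: "length x = m + 1" and y: "length y = m + 1" and "l \<noteq> 0"
    and syn: "syndrome m h y = l * syndrome m h x"
  shows "card {c \<in> parity_code m h. hdist x c = k} = card {c \<in> parity_code m h. hdist y c = k}"
proof (rule bij_betw_same_card[OF bij_betw_byWitness[where f = "affine_move y l x"
                                                    and f' = "affine_move x (inverse l) y"]])
  have syn': "syndrome m h x = inverse l * syndrome m h y"
    using syn \<open>l \<noteq> 0\<close> by simp
  show "affine_move y l x ` {c \<in> parity_code m h. hdist x c = k} \<subseteq> {c \<in> parity_code m h. hdist y c = k}"
    using assms by (auto simp: affine_move_parity_code hdist_affine_move)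
  show "affine_move x (inverse l) y ` {c \<in> parity_code m h. hdist y c = k}
          \<subseteq> {c \<in> parity_code m h. hdist x c = k}"
    using assms syn' by (auto simp: affine_move_parity_code hdist_affine_move)
  show "\<forall>c\<in>{c \<in> parity_code m h. hdist x c = k}. affine_move x (inverse l) y (affine_move y l x c) = c"
    using assms by (auto simp: parity_code_def affine_move_inverse)
  show "\<forall>c\<in>{c \<in> parity_code m h. hdist y c = k}. affine_move y l x (affine_move x (inverse l) y c) = c"
    using assms affine_move_inverse[of "inverse l" y x] by (auto simp: parity_code_def)
qed

section \<open>Distance to the code and complete regularity\<close>

lemma dist_code_parity_code:
  fixes h :: "'a::field list"
  assumes v: "length v = m + 1"
  shows "dist_code v (parity_code m h) = (if syndrome m h v = 0 then 0 else 1)"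
proof (cases "syndrome m h v = 0")
  case True
  then show ?thesis
    using v by (intro dist_code_eqI[of v]) (auto simp: parity_code_def)
next
  case False
  define c where "c = v[m := \<Sum>i<m. v ! i * h ! i]"
  have "(\<Sum>i<m. c ! i * h ! i) = (\<Sum>i<m. v ! i * h ! i)"
    by (intro sum.cong) (auto simp: c_def)
  then have c: "c \<in> parity_code m h"
    using v by (simp add: parity_code_def syndrome_def c_def)
  have far: "1 \<le> hdist v x" if "x \<in> parity_code m h" for x
  proof -
    have "length v = length x" "v \<noteq> x"
      using that False v by (auto simp: parity_code_def)
    then show ?thesis
      using hdist_pos[of v x] by simp
  qed
  have "{j. j < length v \<and> v ! j \<noteq> c ! j} \<subseteq> {m}"
    unfolding c_def by (auto intro: ccontr)
  from card_mono[OF _ this] have "hdist v c \<le> 1"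
    by (simp add: hdist_def)
  with far[OF c] have "hdist v c = 1" by simp
  then show ?thesis
    using False c far by (intro dist_code_eqI[of c]) auto
qed

lemma completely_regular_parity_code:
  fixes h :: "'a::field list"
  shows "completely_regular (m + 1) (parity_code m h)"
  unfolding completely_regular_def
proof (intro ballI impI allI)
  fix x y k
  assume "x \<in> vecs (m + 1)" "y \<in> vecs (m + 1)"
    and same: "dist_code x (parity_code m h) = dist_code y (parity_code m h)"
  then have x: "length x = m + 1" and y: "length y = m + 1"
    by (auto simp: vecs_def)
  have zero_iff: "syndrome m h x = 0 \<longleftrightarrow> syndrome m h y = 0"
    using same unfolding dist_code_parity_code[OF x] dist_code_parity_code[OF y]
    by (cases "syndrome m h x = 0"; cases "syndrome m h y = 0") simp_all
  define l where "l = (if syndrome m h x = 0 then 1 else syndrome m h y / syndrome m h x)"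
  have "l \<noteq> 0" "syndrome m h y = l * syndrome m h x"
    using zero_iff by (cases "syndrome m h x = 0"; simp add: l_def)+
  then show "card {c \<in> parity_code m h. hdist x c = k} = card {c \<in> parity_code m h. hdist y c = k}"
    by (rule card_parity_code_at_distance_eq[OF x y])
qed

lemma covering_radius_parity_code:
  fixes h :: "'a::field list"
  shows "covering_radius (m + 1) (parity_code m h) = 1"
  unfolding covering_radius_def
proof (rule Max_eqI)
  have "dist_code v (parity_code m h) \<le> 1" if "v \<in> vecs (m + 1)" for v
    using that dist_code_parity_code[of v m h] unfolding vecs_def by simp
  then have sub: "{dist_code v (parity_code m h) | v. v \<in> vecs (m + 1)} \<subseteq> {..1}"
    by blast
  then show "finite {dist_code v (parity_code m h) | v. v \<in> vecs (m + 1)}"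
    by (rule finite_subset) simp
  show "r \<le> 1" if "r \<in> {dist_code v (parity_code m h) | v. v \<in> vecs (m + 1)}" for r
    using that sub by blast
  define w :: "'a list" where "w = replicate m 0 @ [1]"
  have "(\<Sum>i<m. w ! i * h ! i) = 0"
    by (intro sum.neutral) (auto simp: w_def nth_append)
  then have "syndrome m h w = 1"
    by (simp add: syndrome_def w_def nth_append)
  then show "1 \<in> {dist_code v (parity_code m h) | v. v \<in> vecs (m + 1)}"
    using dist_code_parity_code[of w m h] unfolding vecs_def
    by (intro CollectI exI[of _ w]) (simp add: w_def)
qed

section \<open>Minimum distance\<close>

definition unit_codeword :: "nat \<Rightarrow> 'a::field list \<Rightarrow> nat \<Rightarrow> 'a list" where
  "unit_codeword m h k = map (\<lambda>j. if j = k then 1 else if j = m then h ! k else 0) [0..<m + 1]"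

lemma length_unit_codeword [simp]: "length (unit_codeword m h k) = m + 1"
  by (simp add: unit_codeword_def)

lemma nth_unit_codeword:
  "j < m + 1 \<Longrightarrow> unit_codeword m h k ! j = (if j = k then 1 else if j = m then h ! k else 0)"
  by (simp add: unit_codeword_def del: upt_Suc)

lemma unit_codeword_in_parity_code:
  assumes "k < m"
  shows "unit_codeword m h k \<in> parity_code m h"
proof -
  have "(\<Sum>i<m. unit_codeword m h k ! i * h ! i) = (\<Sum>i<m. if i = k then h ! k else 0)"
    by (intro sum.cong) (auto simp: nth_unit_codeword)
  then show ?thesis
    using assms by (simp add: parity_code_def syndrome_def nth_unit_codeword)
qed

lemma hdist_zero_unit_codeword:
  assumes "k < m"
  shows "hdist (replicate (m + 1) 0) (unit_codeword m h k) = (if h ! k = 0 then 1 else 2)"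
proof -
  have "{j. j < m + 1 \<and> replicate (m + 1) 0 ! j \<noteq> unit_codeword m h k ! j}
          = (if h ! k = 0 then {k} else {k, m})"
    using assms by (auto simp: nth_unit_codeword simp del: replicate_Suc split: if_splits)
  then show ?thesis
    using assms by (simp add: hdist_def)
qed

lemma zero_in_parity_code: "replicate (m + 1) 0 \<in> parity_code m h"
  by (simp add: parity_code_def syndrome_def del: replicate_Suc)

lemma hdist_parity_code_ge_2:
  fixes h :: "'a::field list"
  assumes nz: "\<forall>i<m. h ! i \<noteq> 0"
    and x: "x \<in> parity_code m h" and y: "y \<in> parity_code m h" and "x \<noteq> y"
  shows "2 \<le> hdist x y"
proof (rule ccontr)
  have len: "length x = m + 1" "length y = m + 1"
    using x y by (auto simp: parity_code_def)
  assume "\<not> 2 \<le> hdist x y"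
  moreover have "0 < hdist x y"
    using len \<open>x \<noteq> y\<close> by (simp add: hdist_pos)
  ultimately have "hdist x y = 1"
    by linarith
  then have "card {j. j < m + 1 \<and> x ! j \<noteq> y ! j} = 1"
    using len by (simp add: hdist_def)
  then obtain k where k: "{j. j < m + 1 \<and> x ! j \<noteq> y ! j} = {k}"
    by (rule card_1_singletonE)
  then have "k < m + 1" "x ! k \<noteq> y ! k" and agree: "\<And>j. j < m + 1 \<Longrightarrow> j \<noteq> k \<Longrightarrow> x ! j = y ! j"
    by blast+
  have "x ! m - y ! m = (\<Sum>i<m. (x ! i - y ! i) * h ! i)"
    using x y by (simp add: parity_code_def syndrome_def sum_subtractf left_diff_distrib)
  also have "\<dots> = (\<Sum>i<m. if i = k then (x ! k - y ! k) * h ! k else 0)"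
    using agree by (intro sum.cong) auto
  finally have diff: "x ! m - y ! m = (if k < m then (x ! k - y ! k) * h ! k else 0)"
    by simp
  show False
  proof (cases "k < m")
    case True
    then show False
      using diff agree[of m] nz \<open>x ! k \<noteq> y ! k\<close> by simp
  next
    case False
    with \<open>k < m + 1\<close> have "k = m" by simp
    then show False
      using diff \<open>x ! k \<noteq> y ! k\<close> by simp
  qed
qed

lemma min_dist_parity_code:
  fixes h :: "'a::field list"
  assumes "k < m" and lower: "\<And>x y. x \<in> parity_code m h \<Longrightarrow> y \<in> parity_code m h \<Longrightarrow> x \<noteq> y
                               \<Longrightarrow> (if h ! k = 0 then 1 else 2) \<le> hdist x y"
  shows "min_dist (parity_code m h) = (if h ! k = 0 then 1 else 2)"
proof (rule min_dist_eqI[OF _ zero_in_parity_code unit_codeword_in_parity_code[OF \<open>k < m\<close>]])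
  show "parity_code m h \<subseteq> vecs (m + 1)"
    by (auto simp: parity_code_def vecs_def)
  show "replicate (m + 1) 0 \<noteq> unit_codeword m h k"
    using hdist_zero_unit_codeword[OF \<open>k < m\<close>, of h] by (metis hdist_self zero_neq_numeral zero_neq_one)
qed (use assms hdist_zero_unit_codeword[OF \<open>k < m\<close>, of h] in \<open>simp_all del: replicate_Suc\<close>)

lemma min_dist_parity_code_zero_entry:
  fixes h :: "'a::field list"
  assumes "k < m" "h ! k = 0"
  shows "min_dist (parity_code m h) = 1"
proof -
  have "1 \<le> hdist x y" if "x \<in> parity_code m h" "y \<in> parity_code m h" "x \<noteq> y" for x y
    using that hdist_pos[of x y] by (auto simp: parity_code_def)
  then show ?thesis
    using min_dist_parity_code[OF \<open>k < m\<close>, where h = h] \<open>h ! k = 0\<close> by simp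
qed

lemma min_dist_parity_code_nonzero:
  fixes h :: "'a::field list"
  assumes "0 < m" "\<forall>i<m. h ! i \<noteq> 0"
  shows "min_dist (parity_code m h) = 2"
  using min_dist_parity_code[OF \<open>0 < m\<close>, where h = h] hdist_parity_code_ge_2[OF assms(2)] assms by simp

section \<open>Weight of the check vector\<close>

lemma wt_less_length_imp_zero_entry:
  assumes "wt h < length h"
  obtains k where "k < length h" "h ! k = 0"
proof -
  have "\<not> (\<forall>k<length h. h ! k \<noteq> 0)"
  proof
    assume "\<forall>k<length h. h ! k \<noteq> 0"
    then have "{i. i < length h \<and> h ! i \<noteq> 0} = {..<length h}"
      by auto
    then show False
      using assms by (simp add: wt_def)
  qed
  then show ?thesis
    using that by auto
qed

lemma wt_eq_length_imp_nonzero: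
  assumes "wt h = length h"
  shows "\<forall>i<length h. h ! i \<noteq> 0"
proof -
  have "{i. i < length h \<and> h ! i \<noteq> 0} = {..<length h}"
  proof (rule card_subset_eq)
    show "card {i. i < length h \<and> h ! i \<noteq> 0} = card {..<length h}"
      using assms by (simp add: wt_def)
  qed auto
  then show ?thesis
    by blast
qed

theorem theorem3p1:
  fixes h :: "'a::{finite,field} list" and m :: nat
  assumes "m \<ge> 1" and "length h = m" and "h \<noteq> replicate m 0"
  defines "C \<equiv> gen_code (gen_matrix_Ih m h) (m + 1)"
  shows "(wt h < m \<longrightarrow> completely_regular (m + 1) C \<and> min_dist C = 1
                          \<and> covering_radius (m + 1) C = 1)
       \<and> (wt h = m \<longrightarrow> completely_regular (m + 1) C \<and> min_dist C = 2
                          \<and> covering_radius (m + 1) C = 1)"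
proof -
  have C: "C = parity_code m h"
    unfolding C_def by (rule gen_code_Ih_eq_parity_code)
  have "min_dist C = 1" if "wt h < m"
    using that assms(2)
    by (metis C min_dist_parity_code_zero_entry wt_less_length_imp_zero_entry)
  moreover have "min_dist C = 2" if "wt h = m"
    using that assms(1,2) wt_eq_length_imp_nonzero[of h]
    by (simp add: C min_dist_parity_code_nonzero)
  ultimately show ?thesis
    using completely_regular_parity_code[of m h] covering_radius_parity_code[of m h] by (simp add: C)
qed

end
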